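(* Let $\Omega\subset\mathbb{R}^d$ be a nonempty open bounded convex set, $U\subset\mathbb{R}^m$ compact, and $f:\overline\Omega\times U\to\mathbb{R}^d$ continuous, and assume that for every $x\in\partial\Omega$ there exists $u\in U$ with $f(x,u)\in\bigcup_{s>0}\frac1s(\Omega-x)$. Then there exists $h>0$ such that $U_t(x)\neq\emptyset$ for every $t\in(0,h]$ and every $x\in\overline\Omega$, where $U_t(x)=\{u\in U:\ x+tf(x,u)\in\Omega\}$.
   Context: $\frac1s(\Omega-x)=\{(z-x)/s:z\in\Omega\}$. *)

theory Defs
  imports "HOL-Analysis.Analysis"
begin

definition scaled_translate :: "real \<Rightarrow> 'a::real_vector set \<Rightarrow> 'a \<Rightarrow> 'a set" where
  "scaled_translate s \<Omega> x = (\<lambda>z. (1 / s) *\<^sub>R (z - x)) ` \<Omega>"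

definition admissible_controls ::
  "'a::real_vector set \<Rightarrow> 'b set \<Rightarrow> ('a \<Rightarrow> 'b \<Rightarrow> 'a) \<Rightarrow> real \<Rightarrow> 'a \<Rightarrow> 'b set" where
  "admissible_controls \<Omega> U f t x = {u \<in> U. x + t *\<^sub>R f x u \<in> \<Omega>}"

end

theory Submission
  imports Defs
begin

text \<open>Every point of the compact set \<open>closure \<Omega>\<close> admits a control \<open>u\<close> and a step \<open>s > 0\<close> with
  \<open>x + s f(x,u) \<in> \<Omega>\<close>: at interior points any small step works, at boundary points this is the
  hypothesis. By continuity and openness of \<open>\<Omega>\<close> the same \<open>u, s\<close> work on a neighbourhood of \<open>x\<close>,
  and compactness yields a uniform lower bound \<open>h\<close> on the steps. Finally, convexity lets every
  step \<open>t \<in> (0, s]\<close> succeed once \<open>s\<close> does, since \<open>x + t f(x,u)\<close> lies on the segment from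
  \<open>x \<in> closure \<Omega>\<close> to the interior point \<open>x + s f(x,u)\<close>.\<close>

lemma mem_scaled_translate_iff:
  assumes "s > 0"
  shows "v \<in> scaled_translate s \<Omega> x \<longleftrightarrow> x + s *\<^sub>R v \<in> \<Omega>"
proof
  assume "v \<in> scaled_translate s \<Omega> x"
  then obtain z where "z \<in> \<Omega>" "v = (1 / s) *\<^sub>R (z - x)"
    unfolding scaled_translate_def by auto
  then show "x + s *\<^sub>R v \<in> \<Omega>" using assms by simp
next
  assume "x + s *\<^sub>R v \<in> \<Omega>"
  moreover have "v = (1 / s) *\<^sub>R ((x + s *\<^sub>R v) - x)" using assms by simp
  ultimately show "v \<in> scaled_translate s \<Omega> x"
    unfolding scaled_translate_def by blast
qed

lemma open_exists_pos_step:
  fixes x v :: "'a::real_normed_vector"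
  assumes "open S" "x \<in> S"
  shows "\<exists>s>0. x + s *\<^sub>R v \<in> S"
proof -
  have "((\<lambda>s. x + s *\<^sub>R v) \<longlongrightarrow> x + 0 *\<^sub>R v) (at_right 0)"
    by (intro tendsto_intros)
  then have "\<forall>\<^sub>F s in at_right 0. x + s *\<^sub>R v \<in> S"
    using assms by (simp add: topological_tendstoD)
  then obtain b where "b > 0" and b: "\<And>s. 0 < s \<Longrightarrow> s < b \<Longrightarrow> x + s *\<^sub>R v \<in> S"
    by (auto simp: eventually_at_right_field)
  then show ?thesis using b[of "b / 2"] by (intro exI[of _ "b / 2"]) auto
qed

lemma convex_open_step_shrink:
  fixes S :: "'a::euclidean_space set"
  assumes "convex S" "open S" "x \<in> closure S" "x + s *\<^sub>R v \<in> S" "0 < t" "t \<le> s"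
  shows "x + t *\<^sub>R v \<in> S"
proof -
  have "x - (t / s) *\<^sub>R (x - (x + s *\<^sub>R v)) \<in> interior S"
    using assms by (intro mem_interior_closure_convex_shrink) (auto simp: interior_open)
  then show ?thesis using assms by (simp add: interior_open)
qed

lemma compact_uniform_step:
  fixes P :: "real \<Rightarrow> 'a::topological_space \<Rightarrow> bool"
  assumes "compact K"
    and "\<And>x. x \<in> K \<Longrightarrow> \<exists>V s. open V \<and> x \<in> V \<and> s > 0 \<and> (\<forall>y\<in>K \<inter> V. P s y)"
  shows "\<exists>h>0. \<forall>y\<in>K. \<exists>s\<ge>h. P s y"
proof -
  obtain V s where V: "\<And>x. x \<in> K \<Longrightarrow> open (V x) \<and> x \<in> V x \<and> s x > 0 \<and> (\<forall>y\<in>K \<inter> V x. P (s x) y)"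
    using assms(2) by metis
  obtain T where T: "T \<subseteq> K" "finite T" "K \<subseteq> (\<Union>c\<in>T. V c)"
    by (rule compactE_image[OF assms(1), of K V]) (use V in auto)
  define h where "h = Min (insert 1 (s ` T))"
  have "h > 0" unfolding h_def using T V by (auto simp: Min_gr_iff)
  moreover have "\<exists>s\<ge>h. P s y" if "y \<in> K" for y
  proof -
    obtain c where "c \<in> T" "y \<in> V c" using T(3) \<open>y \<in> K\<close> by blast
    moreover have "h \<le> s c" unfolding h_def using \<open>c \<in> T\<close> T(2) by auto
    ultimately show ?thesis using V T(1) \<open>y \<in> K\<close> by blast
  qed
  ultimately show ?thesis by blast
qed

lemma closure_exists_inward_step:
  fixes f :: "'a::real_normed_vector \<Rightarrow> 'b \<Rightarrow> 'a"
  assumes "open \<Omega>" "U \<noteq> {}" "x \<in> closure \<Omega>"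
    and "\<forall>x\<in>frontier \<Omega>. \<exists>u\<in>U. f x u \<in> (\<Union>s\<in>{0<..}. scaled_translate s \<Omega> x)"
  shows "\<exists>u\<in>U. \<exists>s>0. x + s *\<^sub>R f x u \<in> \<Omega>"
proof (cases "x \<in> \<Omega>")
  case True
  obtain u where "u \<in> U" using assms(2) by blast
  moreover obtain s where "s > 0" "x + s *\<^sub>R f x u \<in> \<Omega>"
    using open_exists_pos_step[OF assms(1) True] by blast
  ultimately show ?thesis by blast
next
  case False
  then have "x \<in> frontier \<Omega>" using assms(1,3) by (simp add: frontier_def interior_open)
  then obtain u s where "u \<in> U" "s > 0" "f x u \<in> scaled_translate s \<Omega> x"
    using assms(4) by auto
  then show ?thesis using mem_scaled_translate_iff by blast
qed

lemma continuous_inward_step_nhd: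
  fixes f :: "'a::real_normed_vector \<Rightarrow> 'b::topological_space \<Rightarrow> 'a"
  assumes "continuous_on (C \<times> U) (\<lambda>(x, u). f x u)" "open \<Omega>"
    and "u \<in> U" "x \<in> C" "x + s *\<^sub>R f x u \<in> \<Omega>"
  shows "\<exists>V. open V \<and> x \<in> V \<and> (\<forall>y\<in>C \<inter> V. y + s *\<^sub>R f y u \<in> \<Omega>)"
proof -
  have "continuous_on C (\<lambda>y. (\<lambda>(x, u). f x u) (y, u))"
    by (rule continuous_on_compose2[OF assms(1)]) (auto intro!: continuous_intros simp: assms(3))
  then have "continuous_on C (\<lambda>y. y + s *\<^sub>R f y u)"
    by (auto intro!: continuous_intros)
  then obtain V where "open V" "V \<inter> C = (\<lambda>y. y + s *\<^sub>R f y u) -` \<Omega> \<inter> C"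
    using continuous_on_open_invariant assms(2) by metis
  then show ?thesis using assms(4,5) by blast
qed

theorem corollary2p5:
  fixes \<Omega> :: "'d::euclidean_space set" and U :: "'m::euclidean_space set"
    and f :: "'d \<Rightarrow> 'm \<Rightarrow> 'd"
  assumes "\<Omega> \<noteq> {}" and "open \<Omega>" and "bounded \<Omega>" and "convex \<Omega>"
    and "compact U"
    and "continuous_on (closure \<Omega> \<times> U) (\<lambda>(x, u). f x u)"
    and "\<forall>x\<in>frontier \<Omega>. \<exists>u\<in>U. f x u \<in> (\<Union>s\<in>{0<..}. scaled_translate s \<Omega> x)"
  shows "\<exists>h>0. \<forall>t\<in>{0<..h}. \<forall>x\<in>closure \<Omega>. admissible_controls \<Omega> U f t x \<noteq> {}"
proof -
  have "frontier \<Omega> \<noteq> {}"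
    using assms(1,3) frontier_not_empty not_bounded_UNIV by blast
  then have "U \<noteq> {}" using assms(7) by blast
  have "compact (closure \<Omega>)" using assms(3) by (simp add: compact_closure)
  moreover have "\<exists>V s. open V \<and> x \<in> V \<and> s > 0 \<and> (\<forall>y\<in>closure \<Omega> \<inter> V. \<exists>u\<in>U. y + s *\<^sub>R f y u \<in> \<Omega>)"
    if x: "x \<in> closure \<Omega>" for x
  proof -
    obtain u s where "u \<in> U" "s > 0" "x + s *\<^sub>R f x u \<in> \<Omega>"
      using closure_exists_inward_step[OF assms(2) \<open>U \<noteq> {}\<close> x assms(7)] by blast
    moreover obtain V where "open V" "x \<in> V" "\<forall>y\<in>closure \<Omega> \<inter> V. y + s *\<^sub>R f y u \<in> \<Omega>"
      using continuous_inward_step_nhd[OF assms(6,2) \<open>u \<in> U\<close> x] calculation by blast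
    ultimately show ?thesis by blast
  qed
  ultimately obtain h where "h > 0" and h: "\<forall>x\<in>closure \<Omega>. \<exists>s\<ge>h. \<exists>u\<in>U. x + s *\<^sub>R f x u \<in> \<Omega>"
    by (rule compact_uniform_step[elim_format]) auto
  have "admissible_controls \<Omega> U f t x \<noteq> {}" if t: "t \<in> {0<..h}" and x: "x \<in> closure \<Omega>" for t x
  proof -
    obtain s u where "h \<le> s" "u \<in> U" "x + s *\<^sub>R f x u \<in> \<Omega>" using h x by blast
    moreover have "0 < t" "t \<le> s" using t \<open>h \<le> s\<close> by auto
    ultimately have "x + t *\<^sub>R f x u \<in> \<Omega>"
      using convex_open_step_shrink[OF assms(4,2) x] by blast
    then show ?thesis using \<open>u \<in> U\<close> unfolding admissible_controls_def by blast
  qed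
  then show ?thesis using \<open>h > 0\<close> by blast
qed

end
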